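(* For the Bell-state measurement $\Phi=(\Phi^b)_{b=0}^3$ on $\mathbb{C}^2\otimes\mathbb{C}^2$, $Q_{\mathrm{sep}}(\Phi)=\tfrac12$.
   Context: Bell states: $|\Phi^0\rangle=(|00\rangle+|11\rangle)/\sqrt2$, $|\Phi^1\rangle=(|00\rangle-|11\rangle)/\sqrt2$, $|\Phi^2\rangle=(|01\rangle+|10\rangle)/\sqrt2$, $|\Phi^3\rangle=(|01\rangle-|10\rangle)/\sqrt2$, $\Phi^b=|\Phi^b\rangle\langle\Phi^b|$. $Q_{\mathrm{sep}}(\mathscr{P}):=\frac{1}{|B_1'||B_2'|}\max_{\mathscr{F}\in\mathcal{M}_{\mathrm{sep}}}\sum_{j}\operatorname{tr}(F^jP^j)$, where $\mathcal{M}_{\mathrm{sep}}$ is the set of POVMs with the same number of outcomes on $\mathcal{H}_{B_1'}\otimes\mathcal{H}_{B_2'}$ (here $\mathbb{C}^2\otimes\mathbb{C}^2$) whose elements are all separable operators. *)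

theory Defs
  imports "HOL-Analysis.Analysis" "HOL-Library.Numeral_Type"
begin

text \<open>Operators on a finite-dimensional complex Hilbert space with orthonormal basis
indexed by the finite type 'n are represented as matrices complex^'n^'n.
A bipartite space H_1 (x) H_2 has basis indexed by the product type 'a \<times> 'b.\<close>

definition mtrace :: "complex^'n^'n \<Rightarrow> complex" where
  "mtrace M = (\<Sum>i\<in>UNIV. M $ i $ i)"

definition psd :: "complex^'n^'n \<Rightarrow> bool" where
  "psd A \<longleftrightarrow> (\<forall>v :: complex^'n.
      let q = (\<Sum>i\<in>UNIV. \<Sum>j\<in>UNIV. cnj (v $ i) * A $ i $ j * v $ j)
      in Im q = 0 \<and> Re q \<ge> 0)"

definition kron :: "complex^'a^'a \<Rightarrow> complex^'b^'b \<Rightarrow> complex^('a \<times> 'b)^('a \<times> 'b)" where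
  "kron A B = (\<chi> p. \<chi> q. A $ fst p $ fst q * B $ snd p $ snd q)"

definition separable_op :: "complex^('a::finite \<times> 'b::finite)^('a \<times> 'b) \<Rightarrow> bool" where
  "separable_op F \<longleftrightarrow> (\<exists>(n::nat) (A :: nat \<Rightarrow> complex^'a^'a) (B :: nat \<Rightarrow> complex^'b^'b).
      (\<forall>i<n. psd (A i) \<and> psd (B i)) \<and> F = (\<Sum>i<n. kron (A i) (B i)))"

definition sep_POVM :: "nat \<Rightarrow> (nat \<Rightarrow> complex^('a::finite \<times> 'b::finite)^('a \<times> 'b)) \<Rightarrow> bool" where
  "sep_POVM m F \<longleftrightarrow> (\<forall>j<m. psd (F j) \<and> separable_op (F j)) \<and> (\<Sum>j<m. F j) = mat 1"

definition Q_sep :: "nat \<Rightarrow> (nat \<Rightarrow> complex^('a::finite \<times> 'b::finite)^('a \<times> 'b)) \<Rightarrow> real" where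
  "Q_sep m P = (1 / (real CARD('a) * real CARD('b))) *
     (GREATEST v. \<exists>F. sep_POVM m F \<and> v = Re (\<Sum>j<m. mtrace (F j ** P j)))"

definition proj :: "complex^'n \<Rightarrow> complex^'n^'n" where
  "proj phi = (\<chi> i. \<chi> j. phi $ i * cnj (phi $ j))"

definition ket2 :: "2 \<Rightarrow> 2 \<Rightarrow> complex^(2 \<times> 2)" where
  "ket2 x y = (\<chi> p. if p = (x, y) then 1 else 0)"

definition bell_vec :: "nat \<Rightarrow> complex^(2 \<times> 2)" where
  "bell_vec b =
     (if b = 0 then (1 / sqrt 2) *\<^sub>R (ket2 0 0 + ket2 1 1)
      else if b = 1 then (1 / sqrt 2) *\<^sub>R (ket2 0 0 - ket2 1 1)
      else if b = 2 then (1 / sqrt 2) *\<^sub>R (ket2 0 1 + ket2 1 0)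
      else (1 / sqrt 2) *\<^sub>R (ket2 0 1 - ket2 1 0))"

definition bell_meas :: "nat \<Rightarrow> complex^(2 \<times> 2)^(2 \<times> 2)" where
  "bell_meas b = proj (bell_vec b)"

end

theory Submission
  imports Defs
begin

(*
  For PSD operators A, B on C^2 with diagonals a0, a1 and b0, b1, twice the Bell expectation
  <Phi^b| A (x) B |Phi^b> is a0 b0 + a1 b1 +- 2 Re(A01 B01) for b = 0, 1 and
  a0 b1 + a1 b0 +- 2 Re(A01 conj B01) for b = 2, 3. Since |A01|^2 <= a0 a1 and |B01|^2 <= b0 b1,
  AM-GM bounds the off-diagonal term by the two remaining products in
  tr(A (x) B) = (a0 + a1)(b0 + b1). Hence tr(F Phi^b) <= tr(F)/2 for products and, by linearity,
  for all separable F, so a separable POVM scores at most tr(1)/2 = 2. Measuring in the product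
  basis and guessing the Bell state supported on the outcome attains 2; normalising by
  |B1'||B2'| = 4 gives 1/2.
*)

lemma mtrace_zero [simp]: "mtrace 0 = 0"
  unfolding mtrace_def by simp

lemma mtrace_add: "mtrace (X + Y) = mtrace X + mtrace Y"
  unfolding mtrace_def by (simp add: sum.distrib)

lemma mtrace_sum: "mtrace (\<Sum>i\<in>I. M i) = (\<Sum>i\<in>I. mtrace (M i))"
  by (induction I rule: infinite_finite_induct) (simp_all add: mtrace_add)

lemma matrix_add_rdistrib: "((A + B) ** C) = (A ** C) + (B ** C)"
  by (vector matrix_matrix_mult_def sum.distrib[symmetric] field_simps)

lemma matrix_sum_mult: "(\<Sum>i\<in>I. M i) ** P = (\<Sum>i\<in>I. M i ** P)"
  by (induction I rule: infinite_finite_induct) (simp_all add: matrix_add_rdistrib)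

lemma mtrace_mat_1: "mtrace (mat 1 :: complex^'n^'n) = of_nat CARD('n)"
  unfolding mtrace_def mat_def by simp

lemma mtrace_kron: "mtrace (kron A B) = mtrace A * mtrace B"
  unfolding mtrace_def kron_def
  by (simp add: sum_product sum.cartesian_product split_def flip: UNIV_Times_UNIV)

lemma mtrace_mult_proj:
  "mtrace (M ** proj \<phi>) = (\<Sum>p\<in>UNIV. \<Sum>q\<in>UNIV. cnj (\<phi> $ p) * M $ p $ q * \<phi> $ q)"
  unfolding mtrace_def proj_def matrix_matrix_mult_def
  by (simp add: sum_distrib_left mult_ac)

lemma sum_mult_two_point:
  fixes f :: "'n::finite \<Rightarrow> complex"
  assumes "i \<noteq> j"
  shows "(\<Sum>k\<in>UNIV. f k * (if k = i then a else if k = j then b else 0)) = f i * a + f j * b"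
  using assms by (simp add: if_distrib sum.If_cases Int_commute)

lemma psdD:
  assumes "psd A"
  shows "Im (\<Sum>i\<in>UNIV. \<Sum>j\<in>UNIV. cnj (v $ i) * A $ i $ j * v $ j) = 0"
    and "0 \<le> Re (\<Sum>i\<in>UNIV. \<Sum>j\<in>UNIV. cnj (v $ i) * A $ i $ j * v $ j)"
  using assms unfolding psd_def Let_def by blast+

lemma psd_pair_form:
  fixes A :: "complex^'n::finite^'n" and a b :: complex
  assumes "psd A" and "i \<noteq> j"
  defines "q \<equiv> cnj a * A$i$i * a + cnj a * A$i$j * b + cnj b * A$j$i * a + cnj b * A$j$j * b"
  shows "Im q = 0 \<and> 0 \<le> Re q"
proof -
  define v :: "complex^'n" where "v = (\<chi> k. if k = i then a else if k = j then b else 0)"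
  have inner: "(\<Sum>l\<in>UNIV. cnj (v $ k) * A $ k $ l * v $ l) = cnj (v $ k) * (A $ k $ i * a + A $ k $ j * b)" for k
    using sum_mult_two_point[OF assms(2), of "\<lambda>l. cnj (v $ k) * A $ k $ l"]
    by (simp add: v_def algebra_simps)
  have "(\<Sum>k\<in>UNIV. \<Sum>l\<in>UNIV. cnj (v $ k) * A $ k $ l * v $ l)
      = (\<Sum>k\<in>UNIV. (A $ k $ i * a + A $ k $ j * b) * (if k = i then cnj a else if k = j then cnj b else 0))"
    unfolding inner by (rule sum.cong) (simp_all add: v_def mult.commute)
  also have "\<dots> = q"
    unfolding sum_mult_two_point[OF assms(2)] q_def by (simp add: algebra_simps)
  finally show ?thesis
    using psdD[OF assms(1), of v] by simp
qed

lemma psd_diag: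
  fixes A :: "complex^'n::finite^'n"
  assumes "psd A"
  shows "Im (A $ i $ i) = 0" and "0 \<le> Re (A $ i $ i)"
proof -
  have "cnj (axis i 1 $ k) = axis i (1::complex) $ k" for k
    by (simp add: axis_def)
  then have "(\<Sum>k\<in>UNIV. \<Sum>l\<in>UNIV. cnj (axis i 1 $ k) * A $ k $ l * axis i 1 $ l) = A $ i $ i"
    by (simp add: axis_def mult_if_delta mult.commute[of _ "if _ then 1 else 0"])
  then show "Im (A $ i $ i) = 0" and "0 \<le> Re (A $ i $ i)"
    using psdD[OF assms, of "axis i 1"] by simp_all
qed

lemma nonneg_quadratic_discrim_le:
  fixes a b c :: real
  assumes nonneg: "\<And>t. 0 \<le> a * t\<^sup>2 + b * t + c" and "0 \<le> a"
  shows "b\<^sup>2 \<le> 4 * a * c"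
proof (cases "a = 0")
  case True
  have "b = 0"
  proof (rule ccontr)
    assume "b \<noteq> 0"
    then show False
      using nonneg[of "- (\<bar>c\<bar> + 1) / b"] True by simp
  qed
  then show ?thesis using True by simp
next
  case False
  with assms(2) have "0 < a" by simp
  have "0 \<le> a * (- b / (2 * a))\<^sup>2 + b * (- b / (2 * a)) + c" by (rule nonneg)
  also have "\<dots> = (4 * a * c - b\<^sup>2) / (4 * a)"
    using \<open>0 < a\<close> by (simp add: field_simps power2_eq_square)
  finally show ?thesis using \<open>0 < a\<close> by (simp add: zero_le_divide_iff)
qed

lemma psd_hermitian:
  fixes A :: "complex^'n::finite^'n"
  assumes "psd A"
  shows "A $ j $ i = cnj (A $ i $ j)"
proof (cases "i = j")
  case True
  then show ?thesis using psd_diag[OF assms] by (simp add: complex_eq_iff)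
next
  case False
  have "Im (A $ i $ j) + Im (A $ j $ i) = 0"
    using psd_pair_form[OF assms False, of 1 1] psd_diag[OF assms] by simp
  moreover have "Re (A $ i $ j) - Re (A $ j $ i) = 0"
    using psd_pair_form[OF assms False, of 1 \<i>] psd_diag[OF assms] by simp
  ultimately show ?thesis by (simp add: complex_eq_iff)
qed

lemma psd_offdiag_bound:
  fixes A :: "complex^'n::finite^'n"
  assumes "psd A"
  shows "(cmod (A $ i $ j))\<^sup>2 \<le> Re (A $ i $ i) * Re (A $ j $ j)"
proof (cases "i = j")
  case True
  then show ?thesis using psd_diag[OF assms] by (simp add: cmod_eq_Re power2_eq_square)
next
  case False
  define c where "c = (cmod (A $ i $ j))\<^sup>2"
  \<comment> \<open>positivity on (t, - conj A_ij) is a real quadratic in t; its discriminant is Cauchy-Schwarz\<close>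
  have "0 \<le> Re (A $ i $ i) * t\<^sup>2 + (- 2 * c) * t + c * Re (A $ j $ j)" for t :: real
    using psd_pair_form[OF assms False, of "of_real t" "- cnj (A $ i $ j)"] psd_diag[OF assms]
      psd_hermitian[OF assms, of i j]
    unfolding c_def cmod_power2 by (simp add: algebra_simps power2_eq_square)
  then have "(- 2 * c)\<^sup>2 \<le> 4 * Re (A $ i $ i) * (c * Re (A $ j $ j))"
    using psd_diag[OF assms] by (intro nonneg_quadratic_discrim_le) auto
  then have "c * c \<le> c * (Re (A $ i $ i) * Re (A $ j $ j))"
    by (simp add: power2_eq_square algebra_simps)
  moreover have "0 \<le> Re (A $ i $ i) * Re (A $ j $ j)"
    using psd_diag[OF assms] by simp
  moreover have "0 \<le> c" unfolding c_def by simp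
  ultimately have "c \<le> Re (A $ i $ i) * Re (A $ j $ j)"
    by (cases "c = 0") (auto intro: mult_left_le_imp_le)
  then show ?thesis by (simp add: c_def)
qed

lemma cross_mult_le:
  fixes x y a0 a1 b0 b1 :: real
  assumes "0 \<le> a0" "0 \<le> a1" "0 \<le> b0" "0 \<le> b1" "0 \<le> x" "0 \<le> y"
    and "x\<^sup>2 \<le> a0 * a1" and "y\<^sup>2 \<le> b0 * b1"
  shows "2 * x * y \<le> a0 * b1 + a1 * b0"
proof (rule power2_le_imp_le)
  have "(2 * x * y)\<^sup>2 = 4 * x\<^sup>2 * y\<^sup>2" by (simp add: power_mult_distrib)
  also have "\<dots> \<le> 4 * (a0 * a1) * (b0 * b1)"
    using assms by (intro mult_mono) simp_all
  also have "\<dots> \<le> (a0 * b1 + a1 * b0)\<^sup>2"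
    using sum_squares_ge_zero[of "a0 * b1 - a1 * b0" 0] by (simp add: power2_eq_square algebra_simps)
  finally show "(2 * x * y)\<^sup>2 \<le> (a0 * b1 + a1 * b0)\<^sup>2" .
  show "0 \<le> a0 * b1 + a1 * b0" using assms by simp
qed

lemma psd_cross_bound:
  fixes A B :: "complex^'n::finite^'n"
  assumes A: "psd A" and B: "psd B"
  shows "\<bar>2 * Re (A$i$j * B$i$j)\<bar> \<le> Re (A$i$i) * Re (B$j$j) + Re (A$j$j) * Re (B$i$i)"
    and "\<bar>2 * Re (A$i$j * cnj (B$i$j))\<bar> \<le> Re (A$i$i) * Re (B$i$i) + Re (A$j$j) * Re (B$j$j)"
proof -
  note diag = psd_diag(2)[OF A] psd_diag(2)[OF B]
  have "\<bar>2 * Re (A$i$j * B$i$j)\<bar> \<le> 2 * cmod (A$i$j) * cmod (B$i$j)"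
    and "\<bar>2 * Re (A$i$j * cnj (B$i$j))\<bar> \<le> 2 * cmod (A$i$j) * cmod (B$i$j)"
    using abs_Re_le_cmod[of "A$i$j * B$i$j"] abs_Re_le_cmod[of "A$i$j * cnj (B$i$j)"]
    by (simp_all only: abs_mult abs_numeral norm_mult complex_mod_cnj)
  moreover have "2 * cmod (A$i$j) * cmod (B$i$j) \<le> Re (A$i$i) * Re (B$j$j) + Re (A$j$j) * Re (B$i$i)"
    using psd_offdiag_bound[OF A, of i j] psd_offdiag_bound[OF B, of i j]
    by (intro cross_mult_le) (simp_all add: diag)
  moreover have "2 * cmod (A$i$j) * cmod (B$i$j) \<le> Re (A$i$i) * Re (B$i$i) + Re (A$j$j) * Re (B$j$j)"
    using psd_offdiag_bound[OF A, of i j] psd_offdiag_bound[OF B, of i j, unfolded mult.commute[of "Re (B$i$i)"]]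
    by (intro cross_mult_le) (simp_all add: diag)
  ultimately show "\<bar>2 * Re (A$i$j * B$i$j)\<bar> \<le> Re (A$i$i) * Re (B$j$j) + Re (A$j$j) * Re (B$i$i)"
    and "\<bar>2 * Re (A$i$j * cnj (B$i$j))\<bar> \<le> Re (A$i$i) * Re (B$i$i) + Re (A$j$j) * Re (B$j$j)"
    by linarith+
qed

lemma psd_proj: "psd (proj (\<phi> :: complex^'n::finite))"
proof -
  have "(\<Sum>i\<in>UNIV. \<Sum>j\<in>UNIV. cnj (v $ i) * proj \<phi> $ i $ j * v $ j)
      = of_real ((cmod (\<Sum>j\<in>UNIV. cnj (\<phi> $ j) * v $ j))\<^sup>2)" for v :: "complex^'n"
    unfolding proj_def complex_norm_square
    by (simp add: sum_product mult_ac)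
  then show ?thesis unfolding psd_def Let_def by simp
qed

lemma separable_kron: "psd A \<Longrightarrow> psd B \<Longrightarrow> separable_op (kron A B)"
  unfolding separable_op_def
  by (rule exI[of _ 1], rule exI[of _ "\<lambda>_. A"], rule exI[of _ "\<lambda>_. B"]) simp

lemma separable_trace_le:
  fixes F P :: "complex^('a::finite \<times> 'b::finite)^('a \<times> 'b)"
  assumes kron_le: "\<And>(A :: complex^'a^'a) (B :: complex^'b^'b). psd A \<Longrightarrow> psd B \<Longrightarrow> Re (mtrace (kron A B ** P)) \<le> c * Re (mtrace (kron A B))"
    and "separable_op F"
  shows "Re (mtrace (F ** P)) \<le> c * Re (mtrace F)"
proof -
  obtain n and A :: "nat \<Rightarrow> complex^'a^'a" and B :: "nat \<Rightarrow> complex^'b^'b" where AB: "\<forall>i<n. psd (A i) \<and> psd (B i)" and F: "F = (\<Sum>i<n. kron (A i) (B i))"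
    using assms(2) unfolding separable_op_def by blast
  have "Re (mtrace (F ** P)) = (\<Sum>i<n. Re (mtrace (kron (A i) (B i) ** P)))"
    unfolding F matrix_sum_mult mtrace_sum by simp
  also have "\<dots> \<le> (\<Sum>i<n. c * Re (mtrace (kron (A i) (B i))))"
    using AB by (intro sum_mono kron_le) auto
  also have "\<dots> = c * Re (mtrace F)"
    unfolding F mtrace_sum by (simp add: sum_distrib_left)
  finally show ?thesis .
qed

lemma sep_POVM_value_le:
  fixes F P :: "nat \<Rightarrow> complex^('a::finite \<times> 'b::finite)^('a \<times> 'b)"
  assumes F: "sep_POVM m F"
    and sep_le: "\<And>j G. j < m \<Longrightarrow> separable_op G \<Longrightarrow> Re (mtrace (G ** P j)) \<le> c * Re (mtrace G)"
  shows "Re (\<Sum>j<m. mtrace (F j ** P j)) \<le> c * (real CARD('a) * real CARD('b))"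
proof -
  have "Re (\<Sum>j<m. mtrace (F j ** P j)) = (\<Sum>j<m. Re (mtrace (F j ** P j)))"
    by simp
  also have "\<dots> \<le> (\<Sum>j<m. c * Re (mtrace (F j)))"
    using F unfolding sep_POVM_def by (intro sum_mono sep_le) auto
  also have "\<dots> = c * Re (mtrace (\<Sum>j<m. F j))"
    by (simp add: mtrace_sum sum_distrib_left)
  also have "\<dots> = c * (real CARD('a) * real CARD('b))"
    using F unfolding sep_POVM_def by (simp add: mtrace_mat_1)
  finally show ?thesis .
qed

lemma Q_sep_eqI:
  fixes F P :: "nat \<Rightarrow> complex^('a::finite \<times> 'b::finite)^('a \<times> 'b)"
  assumes "sep_POVM m F" and "Re (\<Sum>j<m. mtrace (F j ** P j)) = v"
    and "\<And>G. sep_POVM m G \<Longrightarrow> Re (\<Sum>j<m. mtrace (G j ** P j)) \<le> v"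
  shows "Q_sep m P = v / (real CARD('a) * real CARD('b))"
proof -
  have "(GREATEST v. \<exists>G. sep_POVM m G \<and> v = Re (\<Sum>j<m. mtrace (G j ** P j))) = v"
    using assms by (intro Greatest_equality) auto
  then show ?thesis unfolding Q_sep_def by simp
qed

lemma UNIV_2_eq: "(UNIV :: 2 set) = {0, 1}"
proof -
  have "(2 :: 2) = 0" by simp
  then show ?thesis by (metis UNIV_2 insert_commute)
qed

lemma UNIV_2x2_eq: "(UNIV :: (2 \<times> 2) set) = {(0, 0), (0, 1), (1, 0), (1, 1)}"
  using UNIV_2_eq by auto

(* Kept opaque so that the simplifier does not rewrite 1 / sqrt 2 before amplitudes are paired. *)
definition inv_sqrt2 :: complex where
  "inv_sqrt2 = complex_of_real (1 / sqrt 2)"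

lemma inv_sqrt2_sandwich: "inv_sqrt2 * z * inv_sqrt2 = z / 2"
  and cnj_inv_sqrt2 [simp]: "cnj inv_sqrt2 = inv_sqrt2"
  unfolding inv_sqrt2_def by (simp_all flip: of_real_mult add: mult.commute[of _ z] mult.assoc[symmetric])

lemma bell_vec_component:
  "bell_vec b $ (x, y) = inv_sqrt2 *
     (if b = 0 then (if (x, y) = (0, 0) \<or> (x, y) = (1, 1) then 1 else 0)
      else if b = 1 then (if (x, y) = (0, 0) then 1 else if (x, y) = (1, 1) then -1 else 0)
      else if b = 2 then (if (x, y) = (0, 1) \<or> (x, y) = (1, 0) then 1 else 0)
      else (if (x, y) = (0, 1) then 1 else if (x, y) = (1, 0) then -1 else 0))"
  unfolding bell_vec_def ket2_def inv_sqrt2_def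
  by (simp add: vector_scaleR_component) (auto simp: scaleR_conv_of_real)

lemma mtrace_mult_bell:
  "mtrace (M ** bell_meas 0) = (M$(0,0)$(0,0) + M$(0,0)$(1,1) + M$(1,1)$(0,0) + M$(1,1)$(1,1)) / 2"
  "mtrace (M ** bell_meas 1) = (M$(0,0)$(0,0) - M$(0,0)$(1,1) - M$(1,1)$(0,0) + M$(1,1)$(1,1)) / 2"
  "mtrace (M ** bell_meas 2) = (M$(0,1)$(0,1) + M$(0,1)$(1,0) + M$(1,0)$(0,1) + M$(1,0)$(1,0)) / 2"
  "mtrace (M ** bell_meas 3) = (M$(0,1)$(0,1) - M$(0,1)$(1,0) - M$(1,0)$(0,1) + M$(1,0)$(1,0)) / 2"
  unfolding bell_meas_def mtrace_mult_proj
  by (simp_all add: UNIV_2x2_eq bell_vec_component inv_sqrt2_sandwich add_divide_distrib diff_divide_distrib)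

lemma kron_bell_le:
  fixes A B :: "complex^2^2"
  assumes A: "psd A" and B: "psd B" and "b < 4"
  shows "Re (mtrace (kron A B ** bell_meas b)) \<le> 1 / 2 * Re (mtrace (kron A B))"
proof -
  define a0 a1 b0 b1 where "a0 = Re (A$0$0)" "a1 = Re (A$1$1)" "b0 = Re (B$0$0)" "b1 = Re (B$1$1)"
  define z w where "z = A$0$1" "w = B$0$1"
  have entries: "A$0$0 = of_real a0" "A$1$1 = of_real a1" "B$0$0 = of_real b0" "B$1$1 = of_real b1"
      "A$0$1 = z" "B$0$1 = w" "A$1$0 = cnj z" "B$1$0 = cnj w"
    using psd_diag[OF A] psd_diag[OF B] psd_hermitian[OF A, of 0 1] psd_hermitian[OF B, of 0 1]
    by (simp_all add: a0_a1_b0_b1_def z_w_def complex_eq_iff)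
  have cross: "\<bar>2 * Re (z * w)\<bar> \<le> a0 * b1 + a1 * b0" "\<bar>2 * Re (z * cnj w)\<bar> \<le> a0 * b0 + a1 * b1"
    using psd_cross_bound[OF A B, of 0 1] by (simp_all add: a0_a1_b0_b1_def z_w_def)
  have trace: "Re (mtrace (kron A B)) = (a0 + a1) * (b0 + b1)"
    unfolding mtrace_kron by (simp add: mtrace_def UNIV_2_eq entries)
  note expand = kron_def entries abs_le_iff algebra_simps
  from \<open>b < 4\<close> consider "b = 0" | "b = 1" | "b = 2" | "b = 3" by linarith
  then show ?thesis
  proof cases
    case 1
    show ?thesis using cross(1) unfolding 1 trace mtrace_mult_bell by (simp add: expand)
  next
    case 2
    show ?thesis using cross(1) unfolding 2 trace mtrace_mult_bell by (simp add: expand)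
  next
    case 3
    show ?thesis using cross(2) unfolding 3 trace mtrace_mult_bell by (simp add: expand)
  next
    case 4
    show ?thesis using cross(2) unfolding 4 trace mtrace_mult_bell by (simp add: expand)
  qed
qed

lemma kron_proj: "kron (proj \<phi>) (proj \<psi>) = proj (\<chi> p. \<phi> $ fst p * \<psi> $ snd p)"
  unfolding kron_def proj_def by (simp add: vec_eq_iff mult_ac)

lemma proj_ket2_kron: "proj (ket2 x y) = kron (proj (axis x 1)) (proj (axis y 1))"
proof -
  have "ket2 x y = (\<chi> p. axis x 1 $ fst p * axis y 1 $ snd p)"
    unfolding ket2_def axis_def by (simp add: vec_eq_iff prod_eq_iff)
  then show ?thesis by (simp add: kron_proj)
qed

lemma sum_lessThan_4: "(\<Sum>j<4 :: nat. f j) = f 0 + f 1 + f 2 + f 3"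
  by (simp add: eval_nat_numeral ac_simps)

(* Outcome j is the product basis state in the support of Phi^j. *)
definition comp_basis_meas :: "nat \<Rightarrow> complex^(2 \<times> 2)^(2 \<times> 2)" where
  "comp_basis_meas j = proj (if j = 0 then ket2 0 0 else if j = 1 then ket2 1 1
                             else if j = 2 then ket2 0 1 else ket2 1 0)"

lemma comp_basis_meas_sep_POVM: "sep_POVM 4 comp_basis_meas"
  unfolding sep_POVM_def
proof (intro conjI allI impI)
  fix j :: nat
  show "psd (comp_basis_meas j)"
    unfolding comp_basis_meas_def by (rule psd_proj)
  show "separable_op (comp_basis_meas j)"
    unfolding comp_basis_meas_def by (simp add: proj_ket2_kron separable_kron psd_proj)
next
  have "(\<Sum>j<4. comp_basis_meas j) $ p $ q = mat 1 $ p $ q" for p q :: "2 \<times> 2"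
    using UNIV_I[of p] UNIV_I[of q] unfolding UNIV_2x2_eq
    by (auto simp: sum_lessThan_4 comp_basis_meas_def proj_def ket2_def mat_def)
  then show "(\<Sum>j<4. comp_basis_meas j) = mat 1"
    by (simp add: vec_eq_iff)
qed

lemma comp_basis_meas_value: "Re (\<Sum>j<4. mtrace (comp_basis_meas j ** bell_meas j)) = 2"
  unfolding sum_lessThan_4 mtrace_mult_bell by (simp add: comp_basis_meas_def proj_def ket2_def)

theorem mainTheorem6:
  shows "Q_sep 4 bell_meas = 1 / 2"
proof -
  have "Q_sep 4 bell_meas = 2 / (real CARD(2) * real CARD(2))"
  proof (rule Q_sep_eqI[OF comp_basis_meas_sep_POVM comp_basis_meas_value])
    fix G :: "nat \<Rightarrow> complex^(2 \<times> 2)^(2 \<times> 2)"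
    assume "sep_POVM 4 G"
    then have "Re (\<Sum>j<4. mtrace (G j ** bell_meas j)) \<le> 1 / 2 * (real CARD(2) * real CARD(2))"
      by (rule sep_POVM_value_le) (blast intro: separable_trace_le kron_bell_le)
    then show "Re (\<Sum>j<4. mtrace (G j ** bell_meas j)) \<le> 2" by simp
  qed
  then show ?thesis by simp
qed

end
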